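(* Let $\mathcal{N}$ be an acyclic, weakly non-deterministic negotiation with a fixed topological order $\preceq$ of its graph, and let $C$ be a reachable configuration. Let $n$ be the $\preceq$-smallest node such that $C(d)=\{n\}$ for some deterministic process $d$. Then: (1) if $\mathcal{N}$ is sound, then $n$ is enabled in $C$; (2) for every run $C\xrightarrow{w}C_{\mathit{fin}}$, every node $n'$ occurring in $w$ satisfies $n\preceq n'$.
   Context: A negotiation is a tuple $\mathcal{N}=(\mathit{Proc},N,\mathit{dom},R,\delta)$ where $\mathit{Proc}$ is a finite set of processes, $N$ is a finite set of nodes, $\mathit{dom}:N\to 2^{\mathit{Proc}}\setminus\{\emptyset\}$, there are two distinguished nodes $n_{\mathit{init}},n_{\mathit{fin}}$ with $\mathit{dom}(n_{\mathit{init}})=\mathit{dom}(n_{\mathit{fin}})=\mathit{Proc}$, $R$ is a set of results, each node $n$ has a set $\mathit{out}(n)\subseteq R$ of results (nonempty for $n\neq n_{\mathit{fin}}$), and $\delta(n,a,p)\subseteq N$ is defined and nonempty exactly when $a\in\mathit{out}(n)$ and $p\in\mathit{dom}(n)$, with $p\in\mathit{dom}(n')$ for all $n'\in\delta(n,a,p)$. A configuration is a map $C$ assigning to each process a nonempty set of nodes; $C_{\mathit{init}}(p)=\{n_{\mathit{init}}\}$, $C_{\mathit{fin}}(p)=\{n_{\mathit{fin}}\}$. A node $n$ is enabled in $C$ if $n\in C(p)$ for all $p\in\mathit{dom}(n)$. If $n$ is enabled and $a\in\mathit{out}(n)$ then $C\xrightarrow{(n,a)}C'$ with $C'(p)=\delta(n,a,p)$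 for $p\in\mathit{dom}(n)$, $C'(p)=C(p)$ otherwise. A run is a sequence of such steps; a configuration is reachable if some finite run from $C_{\mathit{init}}$ leads to it; $\mathcal{N}$ is sound if every finite run from $C_{\mathit{init}}$ can be extended to a finite run ending in $C_{\mathit{fin}}$. The graph of $\mathcal{N}$ has vertex set $N$ and edges $n\to n'$ whenever $n'\in\delta(n,a,p)$ for some $a,p$; $\mathcal{N}$ is acyclic if this graph is, and a topological order is a linear order $\preceq$ on $N$ with $m\preceq n$ whenever there is an edge $m\to n$. A process $p$ is deterministic if $\delta(n,a,p)$ is a singleton for all $n$ with $p\in\mathit{dom}(n)$ and $a\in\mathit{out}(n)$; $\mathcal{N}$ is weakly non-deterministic if every node $n$ has a deterministic process in $\mathit{dom}(n)$. *)

theory Defs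
  imports Main
begin

record ('p, 'n, 'r) negotiation =
  procs :: "'p set"
  nodes :: "'n set"
  ndom :: "'n \<Rightarrow> 'p set"
  n_init :: 'n
  n_fin :: 'n
  results :: "'r set"
  out :: "'n \<Rightarrow> 'r set"
  delta :: "'n \<Rightarrow> 'r \<Rightarrow> 'p \<Rightarrow> 'n set"

definition is_negotiation :: "('p, 'n, 'r) negotiation \<Rightarrow> bool" where
  "is_negotiation \<N> \<longleftrightarrow>
     finite (procs \<N>) \<and> finite (nodes \<N>) \<and>
     (\<forall>n\<in>nodes \<N>. ndom \<N> n \<subseteq> procs \<N> \<and> ndom \<N> n \<noteq> {}) \<and>
     n_init \<N> \<in> nodes \<N> \<and> n_fin \<N> \<in> nodes \<N> \<and>
     ndom \<N> (n_init \<N>) = procs \<N> \<and> ndom \<N> (n_fin \<N>) = procs \<N> \<and>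
     (\<forall>n\<in>nodes \<N>. out \<N> n \<subseteq> results \<N>) \<and>
     (\<forall>n\<in>nodes \<N>. n \<noteq> n_fin \<N> \<longrightarrow> out \<N> n \<noteq> {}) \<and>
     (\<forall>n\<in>nodes \<N>. \<forall>a\<in>out \<N> n. \<forall>p\<in>ndom \<N> n.
        delta \<N> n a p \<noteq> {} \<and> delta \<N> n a p \<subseteq> nodes \<N> \<and>
        (\<forall>n'\<in>delta \<N> n a p. p \<in> ndom \<N> n'))"

type_synonym ('p, 'n) config = "'p \<Rightarrow> 'n set"

definition C_init :: "('p, 'n, 'r) negotiation \<Rightarrow> ('p, 'n) config" where
  "C_init \<N> = (\<lambda>p. {n_init \<N>})"

definition C_fin :: "('p, 'n, 'r) negotiation \<Rightarrow> ('p, 'n) config" where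
  "C_fin \<N> = (\<lambda>p. {n_fin \<N>})"

definition enabled :: "('p, 'n, 'r) negotiation \<Rightarrow> ('p, 'n) config \<Rightarrow> 'n \<Rightarrow> bool" where
  "enabled \<N> C n \<longleftrightarrow> n \<in> nodes \<N> \<and> (\<forall>p\<in>ndom \<N> n. n \<in> C p)"

definition step :: "('p, 'n, 'r) negotiation \<Rightarrow> ('p, 'n) config \<Rightarrow> 'n \<times> 'r \<Rightarrow> ('p, 'n) config \<Rightarrow> bool" where
  "step \<N> C na C' \<longleftrightarrow> (case na of (n, a) \<Rightarrow>
     enabled \<N> C n \<and> a \<in> out \<N> n \<and>
     C' = (\<lambda>p. if p \<in> ndom \<N> n then delta \<N> n a p else C p))"

inductive run :: "('p, 'n, 'r) negotiation \<Rightarrow> ('p, 'n) config \<Rightarrow> ('n \<times> 'r) list \<Rightarrow> ('p, 'n) config \<Rightarrow> bool"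
  for \<N> where
  run_Nil: "run \<N> C [] C"
| run_Cons: "step \<N> C na C' \<Longrightarrow> run \<N> C' w C'' \<Longrightarrow> run \<N> C (na # w) C''"

definition reachable :: "('p, 'n, 'r) negotiation \<Rightarrow> ('p, 'n) config \<Rightarrow> bool" where
  "reachable \<N> C \<longleftrightarrow> (\<exists>w. run \<N> (C_init \<N>) w C)"

definition sound :: "('p, 'n, 'r) negotiation \<Rightarrow> bool" where
  "sound \<N> \<longleftrightarrow> (\<forall>w C. run \<N> (C_init \<N>) w C \<longrightarrow> (\<exists>w'. run \<N> C w' (C_fin \<N>)))"

definition edges :: "('p, 'n, 'r) negotiation \<Rightarrow> ('n \<times> 'n) set" where
  "edges \<N> = {(n, n'). n \<in> nodes \<N> \<and> (\<exists>a\<in>out \<N> n. \<exists>p\<in>ndom \<N> n. n' \<in> delta \<N> n a p)}"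

definition acyclic_neg :: "('p, 'n, 'r) negotiation \<Rightarrow> bool" where
  "acyclic_neg \<N> \<longleftrightarrow> acyclic (edges \<N>)"

definition topological_order :: "('p, 'n, 'r) negotiation \<Rightarrow> ('n \<times> 'n) set \<Rightarrow> bool" where
  "topological_order \<N> le \<longleftrightarrow> linear_order_on (nodes \<N>) le \<and> edges \<N> \<subseteq> le"

definition deterministic :: "('p, 'n, 'r) negotiation \<Rightarrow> 'p \<Rightarrow> bool" where
  "deterministic \<N> p \<longleftrightarrow> p \<in> procs \<N> \<and>
     (\<forall>n\<in>nodes \<N>. p \<in> ndom \<N> n \<longrightarrow> (\<forall>a\<in>out \<N> n. is_singleton (delta \<N> n a p)))"

definition weakly_nondeterministic :: "('p, 'n, 'r) negotiation \<Rightarrow> bool" where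
  "weakly_nondeterministic \<N> \<longleftrightarrow> (\<forall>n\<in>nodes \<N>. \<exists>d\<in>ndom \<N> n. deterministic \<N> d)"

end

theory Submission
  imports Defs
begin

text \<open>In a reachable configuration every deterministic process holds exactly one node, and
  all these nodes lie above n. Executing a node m requires m in C(d) for some deterministic d
  in its domain, so m is above n; the successors held afterwards are above m, so the invariant
  survives and every node of every run from C is above n. For soundness, split a run from C to
  C_fin at the first occurrence of n. Before that point n is never executed, so d still holds
  exactly n; and since all executed nodes are strictly above n while edges go upwards, no step
  can put n into any C(p). Hence n is already held by every process of its domain in C: either
  n is executed next, or the prefix is the whole run and n = n_fin.\<close>

lemma step_pairE:
  assumes "step N C (m, a) C'"
  obtains "enabled N C m" "a \<in> out N m"
    and "C' = (\<lambda>p. if p \<in> ndom N m then delta N m a p else C p)"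
  using assms unfolding step_def by auto

lemma run_append_split:
  assumes "run N C (w1 @ w2) C''"
  obtains C' where "run N C w1 C'" "run N C' w2 C''"
  using assms
proof (induction w1 arbitrary: C)
  case Nil
  then show ?case by (auto intro: run.run_Nil)
next
  case (Cons x w1)
  from Cons.prems(2) obtain C1 where "step N C x C1" "run N C1 (w1 @ w2) C''"
    by (auto elim: run.cases)
  with Cons.IH Cons.prems(1) show ?case by (meson run.run_Cons)
qed

lemma step_deterministic_singleton:
  assumes "step N C na C'" "deterministic N d" "is_singleton (C d)"
  shows "is_singleton (C' d)"
  using assms by (cases na) (auto elim: step_pairE simp: enabled_def deterministic_def)

lemma run_deterministic_singleton:
  assumes "run N C w C'" "deterministic N d" "is_singleton (C d)"
  shows "is_singleton (C' d)"
  using assms by induction (auto intro: step_deterministic_singleton)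

lemma reachable_deterministic_singleton:
  assumes "reachable N C" "deterministic N d"
  shows "is_singleton (C d)"
  using assms run_deterministic_singleton
  by (fastforce simp: reachable_def C_init_def)

definition deterministic_lower_bound ::
    "('p, 'n, 'r) negotiation \<Rightarrow> ('n \<times> 'n) set \<Rightarrow> ('p, 'n) config \<Rightarrow> 'n \<Rightarrow> bool" where
  "deterministic_lower_bound N le C n \<longleftrightarrow>
     (\<forall>d. deterministic N d \<longrightarrow> (\<forall>m\<in>C d. (n, m) \<in> le))"

lemma step_node_above_deterministic_lower_bound:
  assumes "step N C (m, a) C'" "deterministic_lower_bound N le C n"
    and "weakly_nondeterministic N"
  shows "(n, m) \<in> le"
proof -
  have en: "enabled N C m" using assms(1) by (rule step_pairE)
  then obtain d where "d \<in> ndom N m" "deterministic N d"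
    using assms(3) unfolding weakly_nondeterministic_def enabled_def by auto
  with en assms(2) show ?thesis
    unfolding enabled_def deterministic_lower_bound_def by auto
qed

lemma step_preserves_deterministic_lower_bound:
  assumes "step N C (m, a) C'" "deterministic_lower_bound N le C n"
    and "weakly_nondeterministic N" "edges N \<subseteq> le" "trans le"
  shows "deterministic_lower_bound N le C' n"
  unfolding deterministic_lower_bound_def
proof (intro allI impI ballI)
  fix d m' assume d: "deterministic N d" "m' \<in> C' d"
  have nm: "(n, m) \<in> le"
    using step_node_above_deterministic_lower_bound[OF assms(1-3)] .
  from assms(1) obtain "enabled N C m" "a \<in> out N m"
    and C': "C' = (\<lambda>p. if p \<in> ndom N m then delta N m a p else C p)"
    by (rule step_pairE)
  show "(n, m') \<in> le"
  proof (cases "d \<in> ndom N m")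
    case True
    with d C' \<open>enabled N C m\<close> \<open>a \<in> out N m\<close> have "(m, m') \<in> edges N"
      unfolding edges_def enabled_def by auto
    with nm assms(4,5) show ?thesis by (meson subsetD transD)
  next
    case False
    with d C' assms(2) show ?thesis unfolding deterministic_lower_bound_def by auto
  qed
qed

lemma run_nodes_above_deterministic_lower_bound:
  assumes "run N C w C'" "deterministic_lower_bound N le C n"
    and "weakly_nondeterministic N" "edges N \<subseteq> le" "trans le"
  shows "\<forall>(m, a) \<in> set w. (n, m) \<in> le"
  using assms
proof induction
  case (run_Cons C na C1 w C'')
  obtain m a where na: "na = (m, a)" by (cases na)
  with run_Cons.hyps(1) have step: "step N C (m, a) C1" by simp
  have "(n, m) \<in> le"
    using step_node_above_deterministic_lower_bound[OF step run_Cons.prems(1,2)] .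
  moreover have "deterministic_lower_bound N le C1 n"
    using step_preserves_deterministic_lower_bound[OF step run_Cons.prems] .
  ultimately show ?case using run_Cons.IH run_Cons.prems(2-4) na by simp
qed simp

lemma step_new_member_edge:
  assumes "step N C (m, a) C'" "n \<in> C' p" "n \<notin> C p"
  shows "(m, n) \<in> edges N"
proof -
  from assms(1) obtain "enabled N C m" "a \<in> out N m"
    and C': "C' = (\<lambda>p. if p \<in> ndom N m then delta N m a p else C p)"
    by (rule step_pairE)
  moreover have "p \<in> ndom N m" using assms(2,3) C' by (auto split: if_splits)
  ultimately show ?thesis using assms(2) unfolding edges_def enabled_def by auto
qed

lemma run_strictly_above_reflects_member:
  assumes "run N C w C'" "\<forall>(m, a) \<in> set w. m \<noteq> n \<and> (n, m) \<in> le"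
    and "edges N \<subseteq> le" "antisym le" "n \<in> C' p"
  shows "n \<in> C p"
  using assms
proof induction
  case (run_Cons C na C1 w C'')
  obtain m a where na: "na = (m, a)" by (cases na)
  with run_Cons.hyps(1) have step: "step N C (m, a) C1" by simp
  have "m \<noteq> n" "(n, m) \<in> le" using run_Cons.prems(1) na by auto
  with run_Cons.prems(3) have "(m, n) \<notin> edges N"
    using run_Cons.prems(2) by (auto dest: antisymD)
  moreover have "n \<in> C1 p" using run_Cons.IH run_Cons.prems by simp
  ultimately show ?case using step_new_member_edge[OF step] by blast
qed simp

lemma step_avoiding_keeps_singleton:
  assumes "step N C (m, a) C'" "m \<noteq> n" "C p = {n}"
  shows "C' p = {n}"
proof -
  from assms(1) obtain "enabled N C m"
    and C': "C' = (\<lambda>p. if p \<in> ndom N m then delta N m a p else C p)"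
    by (rule step_pairE)
  with assms(2,3) have "p \<notin> ndom N m" unfolding enabled_def by auto
  with C' assms(3) show ?thesis by simp
qed

lemma run_avoiding_keeps_singleton:
  assumes "run N C w C'" "\<forall>(m, a) \<in> set w. m \<noteq> n" "C p = {n}"
  shows "C' p = {n}"
  using assms
proof induction
  case (run_Cons C na C1 w C'')
  obtain m a where na: "na = (m, a)" by (cases na)
  with run_Cons.hyps(1) have step: "step N C (m, a) C1" by simp
  have "C1 p = {n}"
    using step_avoiding_keeps_singleton[OF step] run_Cons.prems na by simp
  with run_Cons.IH run_Cons.prems(1) show ?case by simp
qed simp

lemma run_to_fin_enables_lower_bound:
  assumes "run N C w (C_fin N)" "deterministic_lower_bound N le C n"
    and "deterministic N d" "C d = {n}"
    and "weakly_nondeterministic N" "edges N \<subseteq> le" "trans le" "antisym le"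
    and "n_fin N \<in> nodes N"
  shows "enabled N C n"
proof -
  define w1 where "w1 = takeWhile (\<lambda>x. fst x \<noteq> n) w"
  define w2 where "w2 = dropWhile (\<lambda>x. fst x \<noteq> n) w"
  have "run N C (w1 @ w2) (C_fin N)" using assms(1) by (simp add: w1_def w2_def)
  then obtain C2 where r1: "run N C w1 C2" and r2: "run N C2 w2 (C_fin N)"
    by (rule run_append_split)
  have avoid: "\<forall>(m, a) \<in> set w1. m \<noteq> n"
    unfolding w1_def by (auto dest: set_takeWhileD)
  have above: "\<forall>(m, a) \<in> set w1. (n, m) \<in> le"
    using run_nodes_above_deterministic_lower_bound[OF r1 assms(2,5-7)] .
  have reflect: "n \<in> C p" if "n \<in> C2 p" for p
  proof (rule run_strictly_above_reflects_member[OF r1 _ assms(6,8) that])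
    show "\<forall>(m, a) \<in> set w1. m \<noteq> n \<and> (n, m) \<in> le"
      using avoid above by fast
  qed
  show ?thesis
  proof (cases w2)
    case Nil
    then have "C2 = C_fin N" using r2 by (auto elim: run.cases)
    moreover have "C2 d = {n}" using run_avoiding_keeps_singleton[OF r1 avoid assms(4)] .
    ultimately have "n = n_fin N" by (simp add: C_fin_def)
    with \<open>C2 = C_fin N\<close> have "\<And>p. n \<in> C2 p" by (simp add: C_fin_def)
    with reflect \<open>n = n_fin N\<close> assms(9) show ?thesis unfolding enabled_def by blast
  next
    case (Cons x rest)
    then have "fst x = n" unfolding w2_def dropWhile_eq_Cons_conv by simp
    moreover obtain C3 where "step N C2 x C3" using r2 Cons by (auto elim: run.cases)
    ultimately have "enabled N C2 n" unfolding step_def by (cases x) auto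
    with reflect show ?thesis unfolding enabled_def by blast
  qed
qed

theorem lemma4p7:
  fixes \<N> :: "('p, 'n, 'r) negotiation"
    and le :: "('n \<times> 'n) set"
    and C :: "('p, 'n) config"
    and n :: 'n
  assumes "is_negotiation \<N>"
    and "acyclic_neg \<N>"
    and "weakly_nondeterministic \<N>"
    and "topological_order \<N> le"
    and "reachable \<N> C"
    and "\<exists>d. deterministic \<N> d \<and> C d = {n}"
    and "\<And>m. (\<exists>d. deterministic \<N> d \<and> C d = {m}) \<Longrightarrow> (n, m) \<in> le"
  shows "(sound \<N> \<longrightarrow> enabled \<N> C n)
       \<and> (\<forall>w. run \<N> C w (C_fin \<N>) \<longrightarrow> (\<forall>(n', a) \<in> set w. (n, n') \<in> le))"
proof -
  have edges: "edges \<N> \<subseteq> le" and "trans le" "antisym le"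
    using assms(4) unfolding topological_order_def linear_order_on_def
      partial_order_on_def preorder_on_def by auto
  have bound: "deterministic_lower_bound \<N> le C n"
    unfolding deterministic_lower_bound_def
    using reachable_deterministic_singleton[OF assms(5)] assms(7)
    by (metis is_singleton_the_elem singletonD)
  obtain d where d: "deterministic \<N> d" "C d = {n}" using assms(6) by blast
  have "enabled \<N> C n" if sound: "sound \<N>"
  proof -
    obtain w where "run \<N> C w (C_fin \<N>)"
      using sound assms(5) unfolding sound_def reachable_def by blast
    then show ?thesis
      using run_to_fin_enables_lower_bound[OF _ bound d assms(3) edges \<open>trans le\<close> \<open>antisym le\<close>]
        assms(1) unfolding is_negotiation_def by blast
  qed
  then show ?thesis
    using run_nodes_above_deterministic_lower_bound[OF _ bound assms(3) edges \<open>trans le\<close>]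
    by blast
qed

end
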